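(* Let $\sigma>0$, $\lambda>0$, $\nu\in(0,\pi/2)$ and $\kappa_1\in(0,1)$. Then there exists $\hat\varepsilon=\hat\varepsilon(\lambda,\nu)>0$ such that for any $\varepsilon\in(0,\hat\varepsilon)$ there exists $\delta_\varepsilon\in(0,\kappa_1)$ with the following property: for any $\kappa\in(0,\delta_\varepsilon]$, the solution $(x(t),y(t))$ of \[ x'=y,\qquad y'=-\lambda a^+(t)g(x) \] with $x(0)=\kappa$, $y(0)=0$ satisfies \[ -\nu\le\arctan\Bigl(\frac{y(t)}{x(t)}\Bigr)\le0\quad\text{for all }t\in[0,\sigma]. \]
   Context: $a\in L^1(0,\sigma)$ with positive part $a^+$. $g\colon\mathbb{R}\to[0,+\infty)$ is the extension by zero outside $[0,1]$ of a locally Lipschitz continuous function $g\colon[0,1]\to[0,+\infty)$ with $g(0)=g(1)=0$, $g(s)>0$ for $0<s<1$ and $\lim_{s\to0^+}g(s)/s=0$. Solutions are in the Carathéodory sense on $[0,\sigma]$. *)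

theory Defs
  imports "HOL-Analysis.Analysis"
begin

definition pos_part :: "(real \<Rightarrow> real) \<Rightarrow> real \<Rightarrow> real" where
  "pos_part a t = max (a t) 0"

definition admissible_g :: "(real \<Rightarrow> real) \<Rightarrow> bool" where
  "admissible_g g \<longleftrightarrow>
     (\<forall>s. s \<notin> {0..1} \<longrightarrow> g s = 0) \<and>
     (\<forall>s\<in>{0..1}. \<exists>e>0. \<exists>L. L-lipschitz_on (cball s e \<inter> {0..1}) g) \<and>
     (\<forall>s\<in>{0..1}. g s \<ge> 0) \<and>
     g 0 = 0 \<and> g 1 = 0 \<and>
     (\<forall>s. 0 < s \<and> s < 1 \<longrightarrow> g s > 0) \<and>
     ((\<lambda>s. g s / s) \<longlongrightarrow> 0) (at_right 0)"

text \<open>Caratheodory solution on [0,sigma] of x' = y, y' = - lam a^+(t) g(x):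
  x, y absolutely continuous, i.e. given by the integral equations with
  Lebesgue integrable right-hand sides.\<close>
definition cara_solution ::
  "real \<Rightarrow> real \<Rightarrow> (real \<Rightarrow> real) \<Rightarrow> (real \<Rightarrow> real) \<Rightarrow> (real \<Rightarrow> real) \<Rightarrow> (real \<Rightarrow> real) \<Rightarrow> bool" where
  "cara_solution \<sigma> lam a g x y \<longleftrightarrow>
     y absolutely_integrable_on {0..\<sigma>} \<and>
     (\<lambda>s. lam * pos_part a s * g (x s)) absolutely_integrable_on {0..\<sigma>} \<and>
     (\<forall>t\<in>{0..\<sigma>}. x t = x 0 + integral {0..t} y \<and>
                   y t = y 0 - integral {0..t} (\<lambda>s. lam * pos_part a s * g (x s)))"

end

theory Submission
  imports Defs
begin

text \<open>Since g(s) = o(s) as s \<rightarrow> 0+, a solution starting at (\<kappa>, 0) with \<kappa> small feels a forcing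
  \<lambda> a^+ g(x) \<le> \<lambda> \<eta> \<kappa> |a| with \<eta> as small as we like. Hence y only decreases, by at most
  \<lambda> \<eta> \<kappa> times the L1 norm of a, and x stays above \<kappa>/2; for \<eta> small this keeps y/x in [-tan \<nu>, 0].
  The threshold \<delta> does not depend on \<epsilon>.\<close>

lemma admissible_g_nonneg: "admissible_g g \<Longrightarrow> 0 \<le> g s"
  unfolding admissible_g_def by (cases "s \<in> {0..1}") auto

lemma admissible_g_nonpos_eq_0: "admissible_g g \<Longrightarrow> s \<le> 0 \<Longrightarrow> g s = 0"
  unfolding admissible_g_def by (cases "s = 0") auto

lemma admissible_g_sublinear_at_0:
  assumes "admissible_g g" and "\<eta> > 0"
  obtains d where "d > 0" and "\<And>s r. s \<le> r \<Longrightarrow> 0 \<le> r \<Longrightarrow> r < d \<Longrightarrow> g s \<le> \<eta> * r"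
proof -
  have "((\<lambda>s. g s / s) \<longlongrightarrow> 0) (at_right 0)"
    using assms(1) unfolding admissible_g_def by blast
  from order_tendstoD(2)[OF this \<open>\<eta> > 0\<close>]
  obtain d where "d > 0" and d: "\<And>s. 0 < s \<Longrightarrow> s < d \<Longrightarrow> g s / s < \<eta>"
    unfolding eventually_at_right_field by auto
  have "g s \<le> \<eta> * r" if "s \<le> r" "0 \<le> r" "r < d" for s r
  proof (cases "s \<le> 0")
    case True
    then show ?thesis using admissible_g_nonpos_eq_0[OF assms(1)] assms(2) that by simp
  next
    case False
    then have "g s < \<eta> * s" using d[of s] that by (simp add: divide_less_eq)
    also have "\<dots> \<le> \<eta> * r" using assms(2) that by simp
    finally show ?thesis by simp
  qed
  with \<open>d > 0\<close> show thesis by (rule that)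
qed

lemma integral_le_mult_integral_abs:
  fixes f a :: "real \<Rightarrow> real"
  assumes f: "f integrable_on {0..\<sigma>}" and a: "a absolutely_integrable_on {0..\<sigma>}"
    and "c \<ge> 0" and f_le: "\<And>s. s \<in> {0..\<sigma>} \<Longrightarrow> f s \<le> c * \<bar>a s\<bar>" and t: "t \<in> {0..\<sigma>}"
  shows "integral {0..t} f \<le> c * integral {0..\<sigma>} (\<lambda>s. \<bar>a s\<bar>)"
proof -
  have sub: "{0..t} \<subseteq> {0..\<sigma>}" using t by auto
  have abs_a: "(\<lambda>s. \<bar>a s\<bar>) integrable_on {0..\<sigma>}"
    using a by (simp add: absolutely_integrable_on_def)
  then have abs_a_t: "(\<lambda>s. \<bar>a s\<bar>) integrable_on {0..t}"
    using integrable_on_subinterval sub by blast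
  have "integral {0..t} f \<le> integral {0..t} (\<lambda>s. c * \<bar>a s\<bar>)"
    using integrable_on_cmult_left[OF abs_a_t, of c] sub
    by (intro integral_le integrable_on_subinterval[OF f sub] f_le) auto
  also have "\<dots> = c * integral {0..t} (\<lambda>s. \<bar>a s\<bar>)" by simp
  also have "\<dots> \<le> c * integral {0..\<sigma>} (\<lambda>s. \<bar>a s\<bar>)"
    using integral_subset_le[OF sub abs_a_t abs_a] \<open>c \<ge> 0\<close> by (intro mult_left_mono) auto
  finally show ?thesis .
qed

lemma cara_solution_integral_eqs:
  assumes "cara_solution \<sigma> lam a g x y" and "y 0 = 0"
  shows "y integrable_on {0..\<sigma>}"
    and "(\<lambda>s. lam * pos_part a s * g (x s)) integrable_on {0..\<sigma>}"
    and "\<And>t. t \<in> {0..\<sigma>} \<Longrightarrow> x t = x 0 + integral {0..t} y"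
    and "\<And>t. t \<in> {0..\<sigma>} \<Longrightarrow> y t = - integral {0..t} (\<lambda>s. lam * pos_part a s * g (x s))"
proof -
  note sol = assms(1)[unfolded cara_solution_def]
  show "y integrable_on {0..\<sigma>}"
    using sol set_lebesgue_integral_eq_integral(1) by blast
  show "(\<lambda>s. lam * pos_part a s * g (x s)) integrable_on {0..\<sigma>}"
    using sol set_lebesgue_integral_eq_integral(1) by blast
  show "\<And>t. t \<in> {0..\<sigma>} \<Longrightarrow> x t = x 0 + integral {0..t} y"
    using sol by blast
  show "\<And>t. t \<in> {0..\<sigma>} \<Longrightarrow> y t = - integral {0..t} (\<lambda>s. lam * pos_part a s * g (x s))"
    using sol \<open>y 0 = 0\<close> by simp
qed

lemma cara_solution_upper_bounds:
  assumes sol: "cara_solution \<sigma> lam a g x y" and "y 0 = 0"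
    and "lam \<ge> 0" and g_nonneg: "\<And>s. 0 \<le> g s" and t: "t \<in> {0..\<sigma>}"
  shows "y t \<le> 0" and "x t \<le> x 0"
proof -
  note eqs = cara_solution_integral_eqs[OF sol \<open>y 0 = 0\<close>]
  have y_nonpos: "y u \<le> 0" if u: "u \<in> {0..\<sigma>}" for u
  proof -
    have "{0..u} \<subseteq> {0..\<sigma>}" using u by auto
    then have "0 \<le> integral {0..u} (\<lambda>s. lam * pos_part a s * g (x s))"
      using integrable_on_subinterval[OF eqs(2)] \<open>lam \<ge> 0\<close> g_nonneg
      by (intro integral_nonneg) (auto simp: pos_part_def)
    then show ?thesis using eqs(4)[OF u] by simp
  qed
  then show "y t \<le> 0" using t .
  have "{0..t} \<subseteq> {0..\<sigma>}" using t by auto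
  then have "integral {0..t} y \<le> integral {0..t} (\<lambda>_. 0::real)"
    using integrable_on_subinterval[OF eqs(1)] y_nonpos by (intro integral_le) auto
  then show "x t \<le> x 0" using eqs(3)[OF t] by simp
qed

lemma cara_solution_lower_bounds:
  assumes sol: "cara_solution \<sigma> lam a g x y" and "y 0 = 0"
    and a: "a absolutely_integrable_on {0..\<sigma>}" and "c \<ge> 0"
    and forcing_le: "\<And>s. s \<in> {0..\<sigma>} \<Longrightarrow> lam * pos_part a s * g (x s) \<le> c * \<bar>a s\<bar>"
    and t: "t \<in> {0..\<sigma>}"
  defines "A \<equiv> integral {0..\<sigma>} (\<lambda>s. \<bar>a s\<bar>)"
  shows "- (c * A) \<le> y t" and "x 0 - c * A * \<sigma> \<le> x t"
proof -
  note eqs = cara_solution_integral_eqs[OF sol \<open>y 0 = 0\<close>]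
  have y_ge: "- (c * A) \<le> y u" if "u \<in> {0..\<sigma>}" for u
    using integral_le_mult_integral_abs[OF eqs(2) a \<open>c \<ge> 0\<close> forcing_le that] eqs(4)[OF that]
    unfolding A_def by simp
  then show "- (c * A) \<le> y t" using t .
  have "{0..t} \<subseteq> {0..\<sigma>}" using t by auto
  then have "integral {0..t} (\<lambda>_. - (c * A)) \<le> integral {0..t} y"
    using integrable_on_subinterval[OF eqs(1)] y_ge by (intro integral_le) auto
  then have "- (c * A * t) \<le> integral {0..t} y" using t by (simp add: algebra_simps)
  moreover have "0 \<le> c * A"
    unfolding A_def using \<open>c \<ge> 0\<close> a
    by (intro mult_nonneg_nonneg integral_nonneg) (auto simp: absolutely_integrable_on_def)
  then have "c * A * t \<le> c * A * \<sigma>" using t by (intro mult_left_mono) auto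
  ultimately show "x 0 - c * A * \<sigma> \<le> x t" using eqs(3)[OF t] by linarith
qed

lemma arctan_in_sector:
  assumes "0 < x" and "- tan \<nu> * x \<le> y" and "y \<le> 0" and "0 < \<nu>" and "\<nu> < pi / 2"
  shows "- \<nu> \<le> arctan (y / x)" and "arctan (y / x) \<le> 0"
proof -
  have "arctan (- tan \<nu>) \<le> arctan (y / x)"
    using assms(1,2) by (intro arctan_monotone') (simp add: le_divide_eq)
  then show "- \<nu> \<le> arctan (y / x)"
    using arctan_tan arctan_minus assms(4,5) by simp
  show "arctan (y / x) \<le> 0"
    using arctan_monotone'[of "y / x" 0] assms(1,3) by (simp add: divide_nonpos_pos)
qed

lemma cara_solution_in_sector:
  assumes sol: "cara_solution \<sigma> lam a g x y" and "x 0 = \<kappa>" and "y 0 = 0" and "\<kappa> > 0"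
    and "lam > 0" and "0 < \<nu>" and "\<nu> < pi / 2"
    and a: "a absolutely_integrable_on {0..\<sigma>}" and g_nonneg: "\<And>s. 0 \<le> g s" and "\<eta> \<ge> 0"
    and g_small: "\<And>s. s \<le> \<kappa> \<Longrightarrow> g s \<le> \<eta> * \<kappa>"
    and small_x: "2 * lam * \<eta> * integral {0..\<sigma>} (\<lambda>s. \<bar>a s\<bar>) * \<sigma> \<le> 1"
    and small_y: "2 * lam * \<eta> * integral {0..\<sigma>} (\<lambda>s. \<bar>a s\<bar>) \<le> tan \<nu>"
    and t: "t \<in> {0..\<sigma>}"
  shows "x t \<noteq> 0 \<and> - \<nu> \<le> arctan (y t / x t) \<and> arctan (y t / x t) \<le> 0"
proof -
  define A where "A = integral {0..\<sigma>} (\<lambda>s. \<bar>a s\<bar>)"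
  define c where "c = lam * \<eta> * \<kappa>"
  note upper = cara_solution_upper_bounds[OF sol \<open>y 0 = 0\<close> _ g_nonneg]
  have forcing_le: "lam * pos_part a s * g (x s) \<le> c * \<bar>a s\<bar>" if "s \<in> {0..\<sigma>}" for s
  proof -
    have "g (x s) \<le> \<eta> * \<kappa>" using g_small upper(2)[OF _ that] \<open>lam > 0\<close> \<open>x 0 = \<kappa>\<close> by simp
    then have "pos_part a s * g (x s) \<le> \<bar>a s\<bar> * (\<eta> * \<kappa>)"
      using g_nonneg by (intro mult_mono) (auto simp: pos_part_def)
    then show ?thesis unfolding c_def using \<open>lam > 0\<close>
      by (metis mult.assoc mult.commute mult_left_mono less_imp_le)
  qed
  have "c \<ge> 0" unfolding c_def using assms by simp
  note lower = cara_solution_lower_bounds[OF sol \<open>y 0 = 0\<close> a \<open>c \<ge> 0\<close> forcing_le t]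
  have "2 * (c * A * \<sigma>) \<le> \<kappa>"
    using mult_left_mono[OF small_x, of \<kappa>] \<open>\<kappa> > 0\<close> by (simp add: c_def A_def algebra_simps)
  then have x_ge: "\<kappa> / 2 \<le> x t" using lower(2) \<open>x 0 = \<kappa>\<close> unfolding A_def by linarith
  have "2 * (c * A) \<le> tan \<nu> * \<kappa>"
    using mult_left_mono[OF small_y, of \<kappa>] \<open>\<kappa> > 0\<close> by (simp add: c_def A_def algebra_simps)
  moreover have "0 < tan \<nu>" using tan_gt_zero assms(6,7) by blast
  ultimately have "- tan \<nu> * x t \<le> y t"
    using lower(1) x_ge mult_left_mono[OF x_ge, of "tan \<nu>"] unfolding A_def by linarith
  then show ?thesis
    using arctan_in_sector[of "x t"] upper(1)[OF _ t] x_ge assms(4-7) by auto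
qed

lemma obtain_small_gain:
  fixes A \<sigma> lam \<tau> :: real
  assumes "A \<ge> 0" and "\<sigma> > 0" and "lam > 0" and "\<tau> > 0"
  obtains \<eta> where "\<eta> > 0" and "2 * lam * \<eta> * A * \<sigma> \<le> 1" and "2 * lam * \<eta> * A \<le> \<tau>"
proof -
  define \<eta> where "\<eta> = min (1 / (2 * lam * (A + 1) * \<sigma>)) (\<tau> / (2 * lam * (A + 1)))"
  have pos: "0 < 2 * lam * (A + 1) * \<sigma>" "0 < 2 * lam * (A + 1)" using assms by simp_all
  then have "\<eta> > 0" unfolding \<eta>_def using assms(4) by simp
  have "\<eta> \<le> 1 / (2 * lam * (A + 1) * \<sigma>)" "\<eta> \<le> \<tau> / (2 * lam * (A + 1))"
    unfolding \<eta>_def by simp_all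
  with pos have "\<eta> * (2 * lam * (A + 1) * \<sigma>) \<le> 1" "\<eta> * (2 * lam * (A + 1)) \<le> \<tau>"
    by (simp_all add: le_divide_eq)
  moreover have "2 * lam * \<eta> * A * \<sigma> \<le> \<eta> * (2 * lam * (A + 1) * \<sigma>)"
    and "2 * lam * \<eta> * A \<le> \<eta> * (2 * lam * (A + 1))"
    using \<open>\<eta> > 0\<close> assms(2,3) by (simp_all add: algebra_simps)
  ultimately show thesis using that \<open>\<eta> > 0\<close> by fastforce
qed

theorem lemma2p3:
  fixes \<sigma> lam \<nu> \<kappa>1 :: real and a g :: "real \<Rightarrow> real"
  assumes "\<sigma> > 0" and "lam > 0" and "0 < \<nu>" and "\<nu> < pi / 2"
    and "0 < \<kappa>1" and "\<kappa>1 < 1"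
    and "a absolutely_integrable_on {0..\<sigma>}"
    and "admissible_g g"
  shows "\<exists>\<epsilon>_hat::real > 0. \<forall>\<epsilon>::real. 0 < \<epsilon> \<and> \<epsilon> < \<epsilon>_hat \<longrightarrow>
           (\<exists>\<delta>. 0 < \<delta> \<and> \<delta> < \<kappa>1 \<and>
              (\<forall>\<kappa> x y. 0 < \<kappa> \<and> \<kappa> \<le> \<delta> \<and> cara_solution \<sigma> lam a g x y
                   \<and> x 0 = \<kappa> \<and> y 0 = 0 \<longrightarrow>
                 (\<forall>t\<in>{0..\<sigma>}. x t \<noteq> 0 \<and> - \<nu> \<le> arctan (y t / x t) \<and> arctan (y t / x t) \<le> 0)))"
proof -
  have abs_integral_nonneg: "integral {0..\<sigma>} (\<lambda>s. \<bar>a s\<bar>) \<ge> 0"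
    using assms(7) by (intro integral_nonneg) (auto simp: absolutely_integrable_on_def)
  have "tan \<nu> > 0" using tan_gt_zero assms(3,4) by blast
  obtain \<eta> where "\<eta> > 0"
    and small_x: "2 * lam * \<eta> * integral {0..\<sigma>} (\<lambda>s. \<bar>a s\<bar>) * \<sigma> \<le> 1"
    and small_y: "2 * lam * \<eta> * integral {0..\<sigma>} (\<lambda>s. \<bar>a s\<bar>) \<le> tan \<nu>"
    using obtain_small_gain[OF abs_integral_nonneg assms(1,2) \<open>tan \<nu> > 0\<close>] by metis
  obtain d where "d > 0" and g_small: "\<And>s r. s \<le> r \<Longrightarrow> 0 \<le> r \<Longrightarrow> r < d \<Longrightarrow> g s \<le> \<eta> * r"
    using admissible_g_sublinear_at_0[OF assms(8) \<open>\<eta> > 0\<close>] by blast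
  define \<delta> where "\<delta> = min (d / 2) (\<kappa>1 / 2)"
  have "0 < \<delta>" "\<delta> < \<kappa>1" "\<delta> < d" unfolding \<delta>_def using \<open>d > 0\<close> assms(5) by auto
  have sector: "\<forall>t\<in>{0..\<sigma>}. x t \<noteq> 0 \<and> - \<nu> \<le> arctan (y t / x t) \<and> arctan (y t / x t) \<le> 0"
    if "0 < \<kappa>" "\<kappa> \<le> \<delta>" "cara_solution \<sigma> lam a g x y" "x 0 = \<kappa>" "y 0 = 0" for \<kappa> x y
  proof
    fix t assume "t \<in> {0..\<sigma>}"
    have "g s \<le> \<eta> * \<kappa>" if "s \<le> \<kappa>" for s
      using g_small[OF that] \<open>0 < \<kappa>\<close> \<open>\<kappa> \<le> \<delta>\<close> \<open>\<delta> < d\<close> by simp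
    from cara_solution_in_sector[OF that(3-5,1) assms(2-4,7) admissible_g_nonneg[OF assms(8)]
        less_imp_le[OF \<open>\<eta> > 0\<close>] this small_x small_y \<open>t \<in> {0..\<sigma>}\<close>]
    show "x t \<noteq> 0 \<and> - \<nu> \<le> arctan (y t / x t) \<and> arctan (y t / x t) \<le> 0" .
  qed
  show ?thesis
    using \<open>0 < \<delta>\<close> \<open>\<delta> < \<kappa>1\<close> sector by (intro exI[of _ 1] conjI allI impI exI[of _ \<delta>]) auto
qed

end
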